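(* Let $\ell>0$, $T>0$, $0<\underline a\le\overline a<\infty$, and let $a_1,a_2$ be constants with $\underline a\le a_1,a_2\le\overline a$. Let $u_0\in L^2(0,\ell)$, $u_0\neq0$, and $f\in L^2((0,\ell)\times(0,T))$. For $i=1,2$ let $u_i$ be the solution of $$\partial_t u_i-a_i\,\partial_x(x\,\partial_x u_i)=f\ \text{ in }(0,\ell)\times(0,T),\quad x\,\partial_x u_i(x,t)|_{x=0}=0,\ u_i(\ell,t)=0\ (t\in(0,T)),\quad u_i(x,0)=u_0(x).$$ Assume there exist $t_0\in(0,T]$ and $\mu>0$ such that $\int_0^\ell x|\partial_x u_i(x,t_0)|^2\,dx\ge\mu$ for $i=1,2$. Then there exists a constant $C>0$, depending only on $\underline a,\overline a,\ell$ and $\mu$, such that $$|a_2-a_1|\le C\left(\int_0^\ell\Big(|\partial_t u_1(x,t_0)-\partial_t u_2(x,t_0)|^2+x\,|\partial_x u_2(x,t_0)-\partial_x u_1(x,t_0)|^2\Big)dx\right)^{1/2}.$$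
   Context: Solutions are understood as mild solutions $u(t)=e^{tA}u_0+\int_0^te^{(t-s)A}f(s)\,ds$, where $A u=a\,\partial_x(x\partial_x u)$ on $D(A)=\{u\in L^2(0,\ell):\int_0^\ell x|\partial_xu|^2dx<\infty,\ u(\ell)=0,\ x\partial_x u\in H^1(0,\ell)\}$ generates an analytic semigroup of contractions on $L^2(0,\ell)$; the solutions are assumed as smooth as needed for the expressions to make sense. *)

theory Defs
  imports "HOL-Analysis.Analysis"
begin

definition dx :: "(real \<Rightarrow> real \<Rightarrow> real) \<Rightarrow> real \<Rightarrow> real \<Rightarrow> real" where
  "dx u x t = deriv (\<lambda>y. u y t) x"

definition dt :: "real \<Rightarrow> (real \<Rightarrow> real \<Rightarrow> real) \<Rightarrow> real \<Rightarrow> real \<Rightarrow> real" where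
  "dt T u x t = vector_derivative (\<lambda>s. u x s) (at t within {0..T})"

text \<open>u solves  u_t - a (x u_x)_x = f  in (0,l) x (0,T],  x u_x -> 0 at x = 0,
  u(l,t) = 0,  u(.,t) -> u0 in L^2(0,l) as t -> 0+, with the regularity
  (u(t) in D(A), u_t(t) in L^2) assumed for the expressions to make sense.\<close>
definition is_solution ::
  "real \<Rightarrow> real \<Rightarrow> real \<Rightarrow> (real \<Rightarrow> real) \<Rightarrow> (real \<Rightarrow> real \<Rightarrow> real) \<Rightarrow> (real \<Rightarrow> real \<Rightarrow> real) \<Rightarrow> bool"
where
  "is_solution l T a u0 f u \<longleftrightarrow>
     (\<forall>t\<in>{0<..T}. \<forall>x\<in>{0<..<l}.
        (\<lambda>s. u x s) differentiable (at t within {0..T}) \<and>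
        (\<lambda>y. u y t) differentiable (at x) \<and>
        (\<lambda>y. y * dx u y t) differentiable (at x) \<and>
        dt T u x t - a * deriv (\<lambda>y. y * dx u y t) x = f x t) \<and>
     (\<forall>t\<in>{0<..T}. ((\<lambda>x. x * dx u x t) \<longlongrightarrow> 0) (at_right 0) \<and>
        u l t = 0 \<and> ((\<lambda>x. u x t) \<longlongrightarrow> 0) (at_left l)) \<and>
     (\<forall>t\<in>{0<..T}.
        set_integrable lborel {0<..<l} (\<lambda>x. (u x t)\<^sup>2) \<and>
        set_integrable lborel {0<..<l} (\<lambda>x. x * (dx u x t)\<^sup>2) \<and>
        set_integrable lborel {0<..<l} (\<lambda>x. (dt T u x t)\<^sup>2)) \<and>
     ((\<lambda>t. LINT x:{0<..<l}|lborel. (u x t - u0 x)\<^sup>2) \<longlongrightarrow> 0) (at_right 0)"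

end

(* Fix the time t0 and let F = a1 x d_x u1 - a2 x d_x u2 be the difference of the fluxes.
   Subtracting the two equations gives F' = d_t u1 - d_t u2, and F vanishes at x = 0, so
   Cauchy-Schwarz yields F(x)^2 <= x J, where J is the squared L^2 norm of d_t u1 - d_t u2.
   Writing (a1 - a2) x d_x u1 = F + a2 x (d_x u2 - d_x u1), squaring, dividing by x and
   integrating over (0, l) gives (a1 - a2)^2 mu <= 2 l J + 2 a2^2 V, with V the weighted
   L^2 norm of d_x u2 - d_x u1. Hence C = sqrt ((2 l + 2 a_hi^2) / mu) works, and only the
   energy bound for u1 is needed. *)

theory Submission
  imports Defs
begin

lemma set_borel_measurable_derivative:
  fixes F D :: "real \<Rightarrow> real"
  assumes der: "\<And>x. x \<in> {a<..<b} \<Longrightarrow> (F has_real_derivative D x) (at x)"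
  shows "set_borel_measurable borel {a<..<b} D"
proof -
  have contF: "continuous_on {a<..<b} F"
    using der by (meson DERIV_isCont continuous_at_imp_continuous_on)
  define h :: "nat \<Rightarrow> real" where "h n = 1 / Suc n" for n
  have h_pos: "0 < h n" for n
    by (simp add: h_def)
  have h_tendsto: "h \<longlonglongrightarrow> 0"
    unfolding h_def by (rule LIMSEQ_Suc[OF lim_inverse_n'])
  define quot where
    "quot n x = indicator {a<..<b - h n} x * ((F (x + h n) - F x) / h n)" for n x
  have "quot n \<in> borel_measurable borel" for n
  proof -
    have "continuous_on {a<..<b - h n} (\<lambda>x. (F (x + h n) - F x) / h n)"
    proof (intro continuous_intros)
      show "continuous_on {a<..<b - h n} (\<lambda>x. F (x + h n))"
        using h_pos[of n] by (intro continuous_on_compose2[OF contF] continuous_intros) auto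
      show "continuous_on {a<..<b - h n} F"
        by (rule continuous_on_subset[OF contF]) (use h_pos[of n] in auto)
    qed (use h_pos[of n] in auto)
    from borel_measurable_continuous_on_indicator[OF _ this] show ?thesis
      unfolding quot_def by simp
  qed
  moreover have "(\<lambda>n. quot n x) \<longlonglongrightarrow> indicator {a<..<b} x * D x" for x
  proof (cases "x \<in> {a<..<b}")
    case True
    have "((\<lambda>k. (F (x + k) - F x) / k) \<longlongrightarrow> D x) (at 0)"
      using der[OF True] by (simp add: DERIV_def)
    moreover have "filterlim h (at 0) sequentially"
      unfolding filterlim_at using h_tendsto h_pos by (simp add: less_imp_neq[symmetric])
    ultimately have "(\<lambda>n. (F (x + h n) - F x) / h n) \<longlonglongrightarrow> D x"
      by (rule filterlim_compose)
    moreover have "eventually (\<lambda>n. h n < b - x) sequentially"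
      using True by (intro order_tendstoD(2)[OF h_tendsto]) simp
    then have "eventually (\<lambda>n. quot n x = (F (x + h n) - F x) / h n) sequentially"
      by eventually_elim (use True in \<open>auto simp: quot_def\<close>)
    ultimately show ?thesis
      using True by (simp add: tendsto_cong)
  next
    case False
    then have "quot n x = 0" for n
      using h_pos[of n] by (auto simp: quot_def)
    then show ?thesis
      using False by simp
  qed
  ultimately have "(\<lambda>x. indicator {a<..<b} x * D x) \<in> borel_measurable borel"
    by (rule borel_measurable_LIMSEQ_real[rotated])
  then show ?thesis
    unfolding set_borel_measurable_def by simp
qed

lemma abs_integral_le_AM_GM:
  fixes D :: "real \<Rightarrow> real"
  assumes c: "0 < c" and e: "e \<le> x"
    and int: "D integrable_on {e..x}" and int_sq: "(\<lambda>y. (D y)\<^sup>2) integrable_on {e..x}"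
  shows "\<bar>integral {e..x} D\<bar> \<le> integral {e..x} (\<lambda>y. (D y)\<^sup>2) / (2 * c) + c * (x - e) / 2"
proof -
  have int_bound: "(\<lambda>y. (D y)\<^sup>2 / (2 * c) + c / 2) integrable_on {e..x}"
    using int_sq by (intro integrable_add integrable_on_divide) auto
  have "\<bar>integral {e..x} D\<bar> \<le> integral {e..x} (\<lambda>y. (D y)\<^sup>2 / (2 * c) + c / 2)"
  proof (rule integral_norm_bound_integral[OF int int_bound, unfolded real_norm_def])
    fix y
    have "2 * c * \<bar>D y\<bar> \<le> (D y)\<^sup>2 + c\<^sup>2"
      using sum_squares_ge_zero[of "\<bar>D y\<bar> - c" 0] c
      by (simp add: power2_eq_square algebra_simps)
    then show "\<bar>D y\<bar> \<le> (D y)\<^sup>2 / (2 * c) + c / 2"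
      using c by (simp add: field_simps power2_eq_square)
  qed
  also have "\<dots> = integral {e..x} (\<lambda>y. (D y)\<^sup>2) / (2 * c) + c * (x - e) / 2"
    using int_sq e by (subst integral_add) (auto intro: integrable_on_divide)
  finally show ?thesis .
qed

lemma sq_le_of_AM_GM_bounds:
  fixes y x J :: real
  assumes J: "0 \<le> J" and x: "0 < x"
    and bound: "\<And>c. 0 < c \<Longrightarrow> \<bar>y\<bar> \<le> J / (2 * c) + c * x / 2"
  shows "y\<^sup>2 \<le> x * J"
proof (cases "y = 0")
  case False
  then have "\<bar>y\<bar> \<le> J / (2 * (\<bar>y\<bar> / x)) + \<bar>y\<bar> / x * x / 2"
    using x by (intro bound) simp
  then show ?thesis
    using False x by (simp add: field_simps power2_eq_square flip: abs_mult)
qed (use J x in simp)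

lemma sq_le_integral_deriv_sq:
  fixes F D :: "real \<Rightarrow> real"
  assumes der: "\<And>y. y \<in> {a<..<b} \<Longrightarrow> (F has_real_derivative D y) (at y)"
    and lim: "(F \<longlongrightarrow> 0) (at_right a)"
    and int_sq: "(\<lambda>y. (D y)\<^sup>2) integrable_on {a<..<b}"
    and x: "x \<in> {a<..<b}"
  shows "(F x)\<^sup>2 \<le> (x - a) * integral {a<..<b} (\<lambda>y. (D y)\<^sup>2)"
proof (rule sq_le_of_AM_GM_bounds)
  define J where "J = integral {a<..<b} (\<lambda>y. (D y)\<^sup>2)"
  show "0 \<le> J"
    unfolding J_def by (rule integral_nonneg[OF int_sq]) simp
  show "0 < x - a"
    using x by simp
  fix c :: real
  assume c: "0 < c"
  have "\<bar>F x - F e\<bar> \<le> J / (2 * c) + c * (x - a) / 2" if e: "a < e" "e \<le> x" for e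
  proof -
    have sub: "{e..x} \<subseteq> {a<..<b}"
      using e x by auto
    have "(D has_integral (F x - F e)) {e..x}"
    proof (rule fundamental_theorem_of_calculus[OF e(2)])
      fix y
      assume "y \<in> {e..x}"
      then have "(F has_real_derivative D y) (at y)"
        using sub der by blast
      then show "(F has_vector_derivative D y) (at y within {e..x})"
        by (simp add: has_real_derivative_iff_has_vector_derivative has_vector_derivative_at_within)
    qed
    then have FTC: "F x - F e = integral {e..x} D" and int: "D integrable_on {e..x}"
      by (auto simp: integrable_on_def integral_unique)
    have int_sq_sub: "(\<lambda>y. (D y)\<^sup>2) integrable_on {e..x}"
      by (rule integrable_on_subinterval[OF int_sq sub])
    have "integral {e..x} (\<lambda>y. (D y)\<^sup>2) \<le> J"
      unfolding J_def by (rule integral_subset_le[OF sub int_sq_sub int_sq]) simp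
    then have "integral {e..x} (\<lambda>y. (D y)\<^sup>2) / (2 * c) + c * (x - e) / 2 \<le> J / (2 * c) + c * (x - a) / 2"
      using c e by (intro add_mono divide_right_mono mult_left_mono) auto
    with abs_integral_le_AM_GM[OF c e(2) int int_sq_sub] show ?thesis
      unfolding FTC by linarith
  qed
  then have "eventually (\<lambda>e. \<bar>F x - F e\<bar> \<le> J / (2 * c) + c * (x - a) / 2) (at_right a)"
    using x unfolding eventually_at_right_field by (intro exI[of _ x]) auto
  moreover have "((\<lambda>e. \<bar>F x - F e\<bar>) \<longlongrightarrow> \<bar>F x - 0\<bar>) (at_right a)"
    by (intro tendsto_intros lim)
  ultimately show "\<bar>F x\<bar> \<le> J / (2 * c) + c * (x - a) / 2"
    by (intro tendsto_upperbound[where F="at_right a"]) auto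
qed

lemma set_integrable_weighted_sq_diff:
  fixes f g w :: "'a \<Rightarrow> real"
  assumes int_f: "set_integrable M A (\<lambda>x. w x * (f x)\<^sup>2)"
    and int_g: "set_integrable M A (\<lambda>x. w x * (g x)\<^sup>2)"
    and meas_diff: "set_borel_measurable M A (\<lambda>x. f x - g x)"
    and meas_w: "w \<in> borel_measurable M"
    and w: "\<And>x. x \<in> A \<Longrightarrow> 0 \<le> w x"
  shows "set_integrable M A (\<lambda>x. w x * (f x - g x)\<^sup>2)"
proof (rule set_integrable_bound)
  show "set_integrable M A (\<lambda>x. 2 * (w x * (f x)\<^sup>2) + 2 * (w x * (g x)\<^sup>2))"
    using int_f int_g by (intro set_integral_add set_integrable_mult_right)
  have "(\<lambda>x. indicator A x *\<^sub>R (w x * (f x - g x)\<^sup>2)) = (\<lambda>x. w x * (indicator A x * (f x - g x))\<^sup>2)"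
    by (auto simp: indicator_def)
  then show "set_borel_measurable M A (\<lambda>x. w x * (f x - g x)\<^sup>2)"
    using meas_diff unfolding set_borel_measurable_def
    by (simp add: borel_measurable_times[OF meas_w] borel_measurable_power)
  show "AE x in M. x \<in> A \<longrightarrow> norm (w x * (f x - g x)\<^sup>2) \<le> norm (2 * (w x * (f x)\<^sup>2) + 2 * (w x * (g x)\<^sup>2))"
  proof (intro AE_I2 impI)
    fix x
    assume "x \<in> A"
    then have "w x * (f x - g x)\<^sup>2 \<le> w x * (2 * (f x)\<^sup>2 + 2 * (g x)\<^sup>2)"
      using w sum_squares_ge_zero[of "f x + g x" 0]
      by (intro mult_left_mono) (auto simp: power2_eq_square algebra_simps)
    then show "norm (w x * (f x - g x)\<^sup>2) \<le> norm (2 * (w x * (f x)\<^sup>2) + 2 * (w x * (g x)\<^sup>2))"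
      using w[OF \<open>x \<in> A\<close>] by (simp add: algebra_simps)
  qed
qed

lemma weighted_coefficient_gap_le:
  fixes \<phi> \<psi> :: "real \<Rightarrow> real" and a1 a2 l J :: real
  assumes l: "0 < l"
    and int_\<phi>: "(\<lambda>x. x * (\<phi> x)\<^sup>2) integrable_on {0<..<l}"
    and int_diff: "(\<lambda>x. x * (\<psi> x - \<phi> x)\<^sup>2) integrable_on {0<..<l}"
    and flux: "\<And>x. x \<in> {0<..<l} \<Longrightarrow> (a1 * x * \<phi> x - a2 * x * \<psi> x)\<^sup>2 \<le> x * J"
  shows "(a1 - a2)\<^sup>2 * integral {0<..<l} (\<lambda>x. x * (\<phi> x)\<^sup>2)
           \<le> 2 * l * J + 2 * a2\<^sup>2 * integral {0<..<l} (\<lambda>x. x * (\<psi> x - \<phi> x)\<^sup>2)"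
proof -
  have pointwise: "(a1 - a2)\<^sup>2 * (x * (\<phi> x)\<^sup>2) \<le> 2 * J + 2 * a2\<^sup>2 * (x * (\<psi> x - \<phi> x)\<^sup>2)"
    if x: "x \<in> {0<..<l}" for x
  proof -
    \<comment> \<open>\<open>(a1 - a2) x \<phi> = (a1 x \<phi> - a2 x \<psi>) + a2 x (\<psi> - \<phi>)\<close>\<close>
    have "x * ((a1 - a2)\<^sup>2 * (x * (\<phi> x)\<^sup>2))
          \<le> 2 * (a1 * x * \<phi> x - a2 * x * \<psi> x)\<^sup>2 + 2 * (a2 * x * (\<psi> x - \<phi> x))\<^sup>2"
      using sum_squares_ge_zero[of "(a1 * x * \<phi> x - a2 * x * \<psi> x) - a2 * x * (\<psi> x - \<phi> x)" 0]
      by (simp add: power2_eq_square algebra_simps)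
    also have "\<dots> \<le> x * (2 * J + 2 * a2\<^sup>2 * (x * (\<psi> x - \<phi> x)\<^sup>2))"
      using flux[OF x] by (simp add: power2_eq_square algebra_simps)
    finally show ?thesis
      using x by simp
  qed
  have int_const: "(\<lambda>x. 2 * J) integrable_on {0<..<l}"
    unfolding integrable_on_open_interval_real by (rule Henstock_Kurzweil_Integration.integrable_const_ivl)
  have "(a1 - a2)\<^sup>2 * integral {0<..<l} (\<lambda>x. x * (\<phi> x)\<^sup>2)
          = integral {0<..<l} (\<lambda>x. (a1 - a2)\<^sup>2 * (x * (\<phi> x)\<^sup>2))"
    by simp
  also have "\<dots> \<le> integral {0<..<l} (\<lambda>x. 2 * J + 2 * a2\<^sup>2 * (x * (\<psi> x - \<phi> x)\<^sup>2))"
    using pointwise integrable_on_mult_right[OF int_\<phi>]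
      integrable_add[OF int_const integrable_on_mult_right[OF int_diff]]
    by (rule integral_le[rotated 2])
  also have "\<dots> = 2 * l * J + 2 * a2\<^sup>2 * integral {0<..<l} (\<lambda>x. x * (\<psi> x - \<phi> x)\<^sup>2)"
    by (subst integral_add[OF int_const integrable_on_mult_right[OF int_diff]])
       (use l in \<open>simp flip: integral_open_interval_real\<close>)
  finally show ?thesis .
qed

lemma abs_diff_le_sqrt_of_sq_mult_le:
  fixes a b \<mu> K E :: real
  assumes "0 < \<mu>" and "(b - a)\<^sup>2 * \<mu> \<le> K * E"
  shows "\<bar>a - b\<bar> \<le> sqrt (K / \<mu>) * sqrt E"
proof -
  have "(a - b)\<^sup>2 \<le> K / \<mu> * E"
    using assms by (simp add: field_simps power2_commute)
  then have "sqrt ((a - b)\<^sup>2) \<le> sqrt (K / \<mu> * E)"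
    by (rule real_sqrt_le_mono)
  then show ?thesis
    by (simp only: real_sqrt_abs real_sqrt_mult)
qed

lemma flux_difference_has_derivative:
  assumes sol1: "is_solution l T a1 u0 f u1" and sol2: "is_solution l T a2 u0 f u2"
    and t: "t \<in> {0<..T}" and x: "x \<in> {0<..<l}"
  shows "((\<lambda>y. a1 * (y * dx u1 y t) - a2 * (y * dx u2 y t))
           has_real_derivative (dt T u1 x t - dt T u2 x t)) (at x)"
proof -
  have "((\<lambda>y. y * dx u1 y t) has_real_derivative deriv (\<lambda>y. y * dx u1 y t) x) (at x)"
    and "((\<lambda>y. y * dx u2 y t) has_real_derivative deriv (\<lambda>y. y * dx u2 y t) x) (at x)"
    using sol1 sol2 t x by (auto simp: is_solution_def DERIV_deriv_iff_real_differentiable)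
  then have "((\<lambda>y. a1 * (y * dx u1 y t) - a2 * (y * dx u2 y t)) has_real_derivative
      a1 * deriv (\<lambda>y. y * dx u1 y t) x - a2 * deriv (\<lambda>y. y * dx u2 y t) x) (at x)"
    by (intro DERIV_diff DERIV_cmult)
  moreover have "dt T u1 x t - a1 * deriv (\<lambda>y. y * dx u1 y t) x = f x t"
    and "dt T u2 x t - a2 * deriv (\<lambda>y. y * dx u2 y t) x = f x t"
    using sol1 sol2 t x by (auto simp: is_solution_def)
  ultimately show ?thesis
    by (simp add: algebra_simps)
qed

lemma flux_difference_tendsto_zero:
  assumes "is_solution l T a1 u0 f u1" and "is_solution l T a2 u0 f u2" and "t \<in> {0<..T}"
  shows "((\<lambda>y. a1 * (y * dx u1 y t) - a2 * (y * dx u2 y t)) \<longlongrightarrow> 0) (at_right 0)"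
proof -
  have "((\<lambda>y. a1 * (y * dx u1 y t) - a2 * (y * dx u2 y t)) \<longlongrightarrow> a1 * 0 - a2 * 0) (at_right 0)"
    using assms by (intro tendsto_intros) (auto simp: is_solution_def)
  then show ?thesis
    by simp
qed

lemma set_borel_measurable_dx:
  assumes "is_solution l T a u0 f u" and "t \<in> {0<..T}"
  shows "set_borel_measurable borel {0<..<l} (\<lambda>x. dx u x t)"
  using assms unfolding dx_def
  by (intro set_borel_measurable_derivative[where F="\<lambda>y. u y t"])
     (auto simp: is_solution_def DERIV_deriv_iff_real_differentiable)

lemma set_integrable_dt_diff_sq:
  assumes sol1: "is_solution l T a1 u0 f u1" and sol2: "is_solution l T a2 u0 f u2"
    and t: "t \<in> {0<..T}"
  shows "set_integrable lborel {0<..<l} (\<lambda>x. (dt T u1 x t - dt T u2 x t)\<^sup>2)"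
proof -
  \<comment> \<open>The time derivatives need not be measurable one by one, but their difference is the
    spatial derivative of the flux difference.\<close>
  have "set_borel_measurable borel {0<..<l} (\<lambda>x. dt T u1 x t - dt T u2 x t)"
    using flux_difference_has_derivative[OF sol1 sol2 t] by (rule set_borel_measurable_derivative)
  moreover have "set_integrable lborel {0<..<l} (\<lambda>x. (dt T u1 x t)\<^sup>2)"
    and "set_integrable lborel {0<..<l} (\<lambda>x. (dt T u2 x t)\<^sup>2)"
    using sol1 sol2 t by (auto simp: is_solution_def)
  ultimately show ?thesis
    using set_integrable_weighted_sq_diff[where w="\<lambda>_. 1" and f="\<lambda>x. dt T u1 x t" and g="\<lambda>x. dt T u2 x t"]
    by (simp add: set_borel_measurable_def)
qed

lemma set_integrable_weighted_dx_diff_sq: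
  assumes sol1: "is_solution l T a1 u0 f u1" and sol2: "is_solution l T a2 u0 f u2"
    and t: "t \<in> {0<..T}"
  shows "set_integrable lborel {0<..<l} (\<lambda>x. x * (dx u2 x t - dx u1 x t)\<^sup>2)"
proof (rule set_integrable_weighted_sq_diff)
  show "set_integrable lborel {0<..<l} (\<lambda>x. x * (dx u2 x t)\<^sup>2)"
    and "set_integrable lborel {0<..<l} (\<lambda>x. x * (dx u1 x t)\<^sup>2)"
    using sol1 sol2 t by (auto simp: is_solution_def)
  show "set_borel_measurable lborel {0<..<l} (\<lambda>x. dx u2 x t - dx u1 x t)"
    using set_borel_measurable_dx[OF sol1 t] set_borel_measurable_dx[OF sol2 t]
    unfolding set_borel_measurable_def by (simp add: right_diff_distrib)
qed auto

lemma coefficient_stability_at_time: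
  assumes sol1: "is_solution l T a1 u0 f u1" and sol2: "is_solution l T a2 u0 f u2"
    and t0: "t0 \<in> {0<..T}" and l: "0 < l" and a2: "0 < a2" "a2 \<le> A" and \<mu>: "0 < \<mu>"
    and energy: "\<mu> \<le> (LINT x:{0<..<l}|lborel. x * (dx u1 x t0)\<^sup>2)"
  shows "\<bar>a2 - a1\<bar> \<le> sqrt ((2 * l + 2 * A\<^sup>2) / \<mu>) * sqrt (LINT x:{0<..<l}|lborel.
           (dt T u1 x t0 - dt T u2 x t0)\<^sup>2 + x * (dx u2 x t0 - dx u1 x t0)\<^sup>2)"
proof (rule abs_diff_le_sqrt_of_sq_mult_le[OF \<mu>])
  define g where "g x = dt T u1 x t0 - dt T u2 x t0" for x
  define \<delta> where "\<delta> x = dx u2 x t0 - dx u1 x t0" for x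
  define J where "J = integral {0<..<l} (\<lambda>x. (g x)\<^sup>2)"
  define V where "V = integral {0<..<l} (\<lambda>x. x * (\<delta> x)\<^sup>2)"
  note int_g = set_integrable_dt_diff_sq[OF sol1 sol2 t0, folded g_def]
  note int_\<delta> = set_integrable_weighted_dx_diff_sq[OF sol1 sol2 t0, folded \<delta>_def]
  have int_dx1: "set_integrable lborel {0<..<l} (\<lambda>x. x * (dx u1 x t0)\<^sup>2)"
    using sol1 t0 by (auto simp: is_solution_def)
  have J: "0 \<le> J" and V: "0 \<le> V"
    using int_g int_\<delta> unfolding J_def V_def
    by (auto simp: set_borel_integral_eq_integral intro!: integral_nonneg)
  have flux_bound: "(a1 * x * dx u1 x t0 - a2 * x * dx u2 x t0)\<^sup>2 \<le> x * J" if "x \<in> {0<..<l}" for x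
    using sq_le_integral_deriv_sq[OF flux_difference_has_derivative[OF sol1 sol2 t0, folded g_def]
        flux_difference_tendsto_zero[OF sol1 sol2 t0] set_borel_integral_eq_integral(1)[OF int_g] that]
    unfolding J_def by (simp add: algebra_simps)
  have "(a1 - a2)\<^sup>2 * \<mu> \<le> (a1 - a2)\<^sup>2 * (LINT x:{0<..<l}|lborel. x * (dx u1 x t0)\<^sup>2)"
    using energy by (rule mult_left_mono) simp
  also have "\<dots> \<le> 2 * l * J + 2 * a2\<^sup>2 * V"
    unfolding V_def \<delta>_def set_borel_integral_eq_integral(2)[OF int_dx1]
    by (rule weighted_coefficient_gap_le[OF l set_borel_integral_eq_integral(1)[OF int_dx1]
          set_borel_integral_eq_integral(1)[OF int_\<delta>, unfolded \<delta>_def] flux_bound])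
  also have "\<dots> \<le> (2 * l + 2 * A\<^sup>2) * (J + V)"
  proof -
    have "a2\<^sup>2 * V \<le> A\<^sup>2 * V"
      using a2 V by (intro mult_right_mono power_mono) auto
    moreover have "0 \<le> l * V" and "0 \<le> A\<^sup>2 * J"
      using l J V by simp_all
    ultimately show ?thesis
      unfolding ring_distribs by linarith
  qed
  also have "J + V = (LINT x:{0<..<l}|lborel. (dt T u1 x t0 - dt T u2 x t0)\<^sup>2 + x * (dx u2 x t0 - dx u1 x t0)\<^sup>2)"
    using int_g int_\<delta> unfolding J_def V_def g_def \<delta>_def
    by (simp add: set_borel_integral_eq_integral integral_add)
  finally show "(a1 - a2)\<^sup>2 * \<mu> \<le> (2 * l + 2 * A\<^sup>2) * (LINT x:{0<..<l}|lborel.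
      (dt T u1 x t0 - dt T u2 x t0)\<^sup>2 + x * (dx u2 x t0 - dx u1 x t0)\<^sup>2)" .
qed

theorem theorem3p1:
  fixes l a_lo a_hi \<mu> :: real
  assumes "l > 0" and "0 < a_lo" and "a_lo \<le> a_hi" and "\<mu> > 0"
  shows "\<exists>C>0. \<forall>(T::real) (a1::real) (a2::real) (u0::real\<Rightarrow>real) (f::real\<Rightarrow>real\<Rightarrow>real)
            (u1::real\<Rightarrow>real\<Rightarrow>real) (u2::real\<Rightarrow>real\<Rightarrow>real) (t0::real).
     T > 0 \<and> a_lo \<le> a1 \<and> a1 \<le> a_hi \<and> a_lo \<le> a2 \<and> a2 \<le> a_hi \<and>
     u0 \<in> borel_measurable lborel \<and> set_integrable lborel {0<..<l} (\<lambda>x. (u0 x)\<^sup>2) \<and>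
     \<not> (AE x in lborel. x \<in> {0<..<l} \<longrightarrow> u0 x = 0) \<and>
     (\<lambda>(x,t). f x t) \<in> borel_measurable lborel \<and>
     set_integrable lborel ({0<..<l} \<times> {0<..<T}) (\<lambda>(x,t). (f x t)\<^sup>2) \<and>
     is_solution l T a1 u0 f u1 \<and> is_solution l T a2 u0 f u2 \<and>
     t0 \<in> {0<..T} \<and>
     (LINT x:{0<..<l}|lborel. x * (dx u1 x t0)\<^sup>2) \<ge> \<mu> \<and>
     (LINT x:{0<..<l}|lborel. x * (dx u2 x t0)\<^sup>2) \<ge> \<mu>
     \<longrightarrow> \<bar>a2 - a1\<bar> \<le> C * sqrt (LINT x:{0<..<l}|lborel.
              (dt T u1 x t0 - dt T u2 x t0)\<^sup>2 + x * (dx u2 x t0 - dx u1 x t0)\<^sup>2)"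
proof (intro exI[of _ "sqrt ((2 * l + 2 * a_hi\<^sup>2) / \<mu>)"] conjI allI impI)
  show "0 < sqrt ((2 * l + 2 * a_hi\<^sup>2) / \<mu>)"
    using assms by (simp add: add_pos_nonneg)
qed (use assms in \<open>auto intro!: coefficient_stability_at_time\<close>)

end
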